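(* Let $M$ be a multiplicity free object of a nonzero finite abelian category $\mathcal C$ over $\mathbb F$ and $\mathscr F$ an increasing semisimple filtration on $M$. If $\sigma\in\mathrm{JH}(M)$ points to $\sigma'\in\mathrm{JH}(M)$, then $d^{\mathscr F}_M(\sigma)>d^{\mathscr F}_M(\sigma')$.
   Context: $\mathcal C$ is an $\mathbb F$-linear abelian category all of whose objects have finite length. An increasing filtration $\mathscr F$ on $M$ is a chain of subobjects $\mathscr F_nM\subseteq\mathscr F_{n+1}M$ ($n\in\mathbb Z$), exhaustive and separated, normalized so that $\mathscr F_nM/\mathscr F_{n-1}M=0$ for $n<0$; it is semisimple if all graded pieces $\mathscr F_nM/\mathscr F_{n-1}M$ are semisimple. For $M$ multiplicity free and $\sigma\in\mathrm{JH}(M)$, $d^{\mathscr F}_M(\sigma)$ is the unique $n$ with $\mathrm{Hom}(\sigma,\mathscr F_nM/\mathscr F_{n-1}M)\neq0$. $\sigma$ points to $\sigma'$ if the subquotient of $M$ which is an extension $0\to\sigma'\to X\to\sigma\to0$ is nonsplit. *)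

theory Defs
  imports Main
begin

text \<open>Concrete model: the ambient abelian category is a category of (left) modules over a
ring; an object M is a carrier set M of an abelian group type with a scalar action act.
Subobjects of M are submodules; a subquotient b/a is a pair of submodules a \<subseteq> b.\<close>

definition module_on :: "('r::ring_1 \<Rightarrow> 'm::ab_group_add \<Rightarrow> 'm) \<Rightarrow> 'm set \<Rightarrow> bool" where
  "module_on act M \<longleftrightarrow> 0 \<in> M \<and> (\<forall>x\<in>M. \<forall>y\<in>M. x + y \<in> M) \<and> (\<forall>x\<in>M. - x \<in> M)
     \<and> (\<forall>r. \<forall>x\<in>M. act r x \<in> M)
     \<and> (\<forall>x\<in>M. act 1 x = x)
     \<and> (\<forall>r s. \<forall>x\<in>M. act (r * s) x = act r (act s x))
     \<and> (\<forall>r s. \<forall>x\<in>M. act (r + s) x = act r x + act s x)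
     \<and> (\<forall>r. \<forall>x\<in>M. \<forall>y\<in>M. act r (x + y) = act r x + act r y)"

definition submod :: "('r::ring_1 \<Rightarrow> 'm::ab_group_add \<Rightarrow> 'm) \<Rightarrow> 'm set \<Rightarrow> 'm set \<Rightarrow> bool" where
  "submod act M N \<longleftrightarrow> N \<subseteq> M \<and> 0 \<in> N \<and> (\<forall>x\<in>N. \<forall>y\<in>N. x + y \<in> N) \<and> (\<forall>x\<in>N. - x \<in> N)
     \<and> (\<forall>r. \<forall>x\<in>N. act r x \<in> N)"

definition ssum :: "'m::ab_group_add set \<Rightarrow> 'm set \<Rightarrow> 'm set" where
  "ssum A B = {x + y | x y. x \<in> A \<and> y \<in> B}"

text \<open>A morphism from the subquotient b/a to the subquotient d/c, represented by a
(set-theoretic) lift g : b \<rightarrow> d, well defined modulo c.\<close>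
definition qhom :: "('r::ring_1 \<Rightarrow> 'm::ab_group_add \<Rightarrow> 'm) \<Rightarrow> 'm set \<Rightarrow> 'm set \<Rightarrow> 'm set \<Rightarrow> 'm set
                     \<Rightarrow> ('m \<Rightarrow> 'm) \<Rightarrow> bool" where
  "qhom act a b c d g \<longleftrightarrow> (\<forall>x\<in>b. g x \<in> d)
     \<and> (\<forall>x\<in>b. \<forall>y\<in>b. g (x + y) - (g x + g y) \<in> c)
     \<and> (\<forall>r. \<forall>x\<in>b. g (act r x) - act r (g x) \<in> c)
     \<and> (\<forall>x\<in>a. g x \<in> c)"

definition sq_iso :: "('r::ring_1 \<Rightarrow> 'm::ab_group_add \<Rightarrow> 'm) \<Rightarrow> 'm set \<Rightarrow> 'm set \<Rightarrow> 'm set \<Rightarrow> 'm set \<Rightarrow> bool" where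
  "sq_iso act a b c d \<longleftrightarrow> (\<exists>g. qhom act a b c d g
     \<and> (\<forall>x\<in>b. g x \<in> c \<longrightarrow> x \<in> a)
     \<and> (\<forall>y\<in>d. \<exists>x\<in>b. y - g x \<in> c))"

definition simple_sq :: "('r::ring_1 \<Rightarrow> 'm::ab_group_add \<Rightarrow> 'm) \<Rightarrow> 'm set \<Rightarrow> 'm set \<Rightarrow> 'm set \<Rightarrow> bool" where
  "simple_sq act M a b \<longleftrightarrow> submod act M a \<and> submod act M b \<and> a \<subset> b
     \<and> (\<forall>c. submod act M c \<and> a \<subseteq> c \<and> c \<subseteq> b \<longrightarrow> c = a \<or> c = b)"

definition semisimple_sq :: "('r::ring_1 \<Rightarrow> 'm::ab_group_add \<Rightarrow> 'm) \<Rightarrow> 'm set \<Rightarrow> 'm set \<Rightarrow> 'm set \<Rightarrow> bool" where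
  "semisimple_sq act M a b \<longleftrightarrow> (\<forall>c. submod act M c \<and> a \<subseteq> c \<and> c \<subseteq> b \<longrightarrow>
     (\<exists>e. submod act M e \<and> a \<subseteq> e \<and> e \<subseteq> b \<and> c \<inter> e = a \<and> ssum c e = b))"

definition comp_series :: "('r::ring_1 \<Rightarrow> 'm::ab_group_add \<Rightarrow> 'm) \<Rightarrow> 'm set \<Rightarrow> (nat \<Rightarrow> 'm set) \<Rightarrow> nat \<Rightarrow> bool" where
  "comp_series act M s k \<longleftrightarrow> s 0 = {0} \<and> s k = M \<and> (\<forall>i<k. simple_sq act M (s i) (s (Suc i)))"

definition finite_length :: "('r::ring_1 \<Rightarrow> 'm::ab_group_add \<Rightarrow> 'm) \<Rightarrow> 'm set \<Rightarrow> bool" where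
  "finite_length act M \<longleftrightarrow> (\<exists>s k. comp_series act M s k)"

definition mult_free :: "('r::ring_1 \<Rightarrow> 'm::ab_group_add \<Rightarrow> 'm) \<Rightarrow> 'm set \<Rightarrow> bool" where
  "mult_free act M \<longleftrightarrow> (\<forall>s k. comp_series act M s k \<longrightarrow>
     (\<forall>i j. i < j \<and> j < k \<longrightarrow> \<not> sq_iso act (s i) (s (Suc i)) (s j) (s (Suc j))))"

definition incr_filtration :: "('r::ring_1 \<Rightarrow> 'm::ab_group_add \<Rightarrow> 'm) \<Rightarrow> 'm set \<Rightarrow> (int \<Rightarrow> 'm set) \<Rightarrow> bool" where
  "incr_filtration act M F \<longleftrightarrow> (\<forall>n. submod act M (F n)) \<and> (\<forall>n. F n \<subseteq> F (n + 1))
     \<and> (\<exists>n. F n = M) \<and> (\<exists>n. F n = {0}) \<and> (\<forall>n<0. F n = F (n - 1))"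

definition semisimple_filtration :: "('r::ring_1 \<Rightarrow> 'm::ab_group_add \<Rightarrow> 'm) \<Rightarrow> 'm set \<Rightarrow> (int \<Rightarrow> 'm set) \<Rightarrow> bool" where
  "semisimple_filtration act M F \<longleftrightarrow> incr_filtration act M F
     \<and> (\<forall>n. semisimple_sq act M (F (n - 1)) (F n))"

text \<open>d^F_M(sigma) for sigma = b/a: the unique n with Hom(sigma, F_n M / F_(n-1) M) nonzero.\<close>
definition dF :: "('r::ring_1 \<Rightarrow> 'm::ab_group_add \<Rightarrow> 'm) \<Rightarrow> (int \<Rightarrow> 'm set) \<Rightarrow> 'm set \<Rightarrow> 'm set \<Rightarrow> int" where
  "dF act F a b = (THE n. \<exists>g. qhom act a b (F (n - 1)) (F n) g \<and> (\<exists>x\<in>b. g x \<notin> F (n - 1)))"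

text \<open>sigma = b/a points to sigma' = b'/a': the subquotient of M which is an extension
0 \<rightarrow> sigma' \<rightarrow> X \<rightarrow> sigma \<rightarrow> 0 is nonsplit.\<close>
definition points_to :: "('r::ring_1 \<Rightarrow> 'm::ab_group_add \<Rightarrow> 'm) \<Rightarrow> 'm set \<Rightarrow> 'm set \<Rightarrow> 'm set \<Rightarrow> 'm set \<Rightarrow> 'm set \<Rightarrow> bool" where
  "points_to act M a b a' b' \<longleftrightarrow> (\<exists>U0 U1 U2. submod act M U0 \<and> submod act M U1 \<and> submod act M U2
     \<and> U0 \<subseteq> U1 \<and> U1 \<subseteq> U2 \<and> sq_iso act U0 U1 a' b' \<and> sq_iso act U1 U2 a b
     \<and> \<not> (\<exists>V. submod act M V \<and> U0 \<subseteq> V \<and> V \<subseteq> U2 \<and> V \<inter> U1 = U0 \<and> ssum V U1 = U2))"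

end

theory Submission
  imports Defs
begin

(* For a simple subquotient b/a, the degree d(b/a) is the least k with b \<subseteq> a + F_k. At that level, for a
   complement E of (a + F_(k-1)) \<inter> F_k in the semisimple layer F_k over F_(k-1), the projection of
   b \<subseteq> (a + F_(k-1)) + E onto E along a + F_(k-1) is a nonzero map b/a \<rightarrow> F_k/F_(k-1). A nonzero map at a
   second level would exhibit b/a twice as a composition factor of M, which multiplicity freeness forbids;
   so d(b/a) is this level, and it is invariant under isomorphism of subquotients.
   Let U0 \<subseteq> U1 \<subseteq> U2 realise the extension, with U1/U0 of degree p and U2/U1 of degree q. If q \<le> p, then
   U2 \<subseteq> U0 + F_p while U1 \<inter> (U0 + F_(p-1)) = U0. For a complement E of (U1 + F_(p-1)) \<inter> F_p in F_p over
   F_(p-1), the submodule U0 + (U2 \<inter> E) is then a complement of U1 over U0 in U2: the extension splits. *)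

section \<open>Submodules and their sums\<close>

lemma submod_subset: "submod act M N \<Longrightarrow> N \<subseteq> M"
  by (simp add: submod_def)

lemma submod_zero_mem: "submod act M N \<Longrightarrow> 0 \<in> N"
  by (simp add: submod_def)

lemma submod_add: "submod act M N \<Longrightarrow> x \<in> N \<Longrightarrow> y \<in> N \<Longrightarrow> x + y \<in> N"
  by (simp add: submod_def)

lemma submod_neg: "submod act M N \<Longrightarrow> x \<in> N \<Longrightarrow> - x \<in> N"
  by (simp add: submod_def)

lemma submod_act: "submod act M N \<Longrightarrow> x \<in> N \<Longrightarrow> act r x \<in> N"
  by (simp add: submod_def)

lemma submod_diff: "submod act M N \<Longrightarrow> x \<in> N \<Longrightarrow> y \<in> N \<Longrightarrow> x - y \<in> N"
  using submod_add[of act M N x "- y"] submod_neg[of act M N y] by simp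

lemma submod_add_cancel_left: "submod act M N \<Longrightarrow> x \<in> N \<Longrightarrow> x + y \<in> N \<Longrightarrow> y \<in> N"
  using submod_diff[of act M N "x + y" x] by simp

lemma submod_diff_cancel_right: "submod act M N \<Longrightarrow> y \<in> N \<Longrightarrow> x - y \<in> N \<Longrightarrow> x \<in> N"
  using submod_add[of act M N "x - y" y] by simp

lemma submod_Int: "submod act M A \<Longrightarrow> submod act M B \<Longrightarrow> submod act M (A \<inter> B)"
  by (auto simp add: submod_def)

lemma act_add: "module_on act M \<Longrightarrow> x \<in> M \<Longrightarrow> y \<in> M \<Longrightarrow> act r (x + y) = act r x + act r y"
  by (simp add: module_on_def)

lemma act_diff:
  assumes M: "module_on act M" and x: "x \<in> M" and y: "y \<in> M"
  shows "act r (x - y) = act r x - act r y"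
proof -
  have "x - y \<in> M"
    using M x y unfolding module_on_def by (metis diff_conv_add_uminus)
  then have "act r x = act r (x - y) + act r y"
    using act_add[OF M _ y] by (metis diff_add_cancel)
  then show ?thesis by (simp add: algebra_simps)
qed

lemma submod_carrier: "module_on act M \<Longrightarrow> submod act M M"
  by (simp add: module_on_def submod_def)

lemma submod_zero: "module_on act M \<Longrightarrow> submod act M {0}"
  using act_diff[of act M 0 0] by (simp add: module_on_def submod_def)

lemma ssumI: "x \<in> A \<Longrightarrow> y \<in> B \<Longrightarrow> x + y \<in> ssum A B"
  by (auto simp: ssum_def)

lemma ssumE: "z \<in> ssum A B \<Longrightarrow> (\<And>x y. z = x + y \<Longrightarrow> x \<in> A \<Longrightarrow> y \<in> B \<Longrightarrow> P) \<Longrightarrow> P"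
  by (auto simp: ssum_def)

lemma ssum_commute: "ssum A B = ssum B A"
  unfolding ssum_def by (metis add.commute)

lemma ssum_upper1: "0 \<in> B \<Longrightarrow> A \<subseteq> ssum A B"
  using ssumI[of _ A 0 B] by auto

lemma ssum_upper2: "0 \<in> A \<Longrightarrow> B \<subseteq> ssum A B"
  using ssumI[of 0 A _ B] by auto

lemma ssum_least: "submod act M C \<Longrightarrow> A \<subseteq> C \<Longrightarrow> B \<subseteq> C \<Longrightarrow> ssum A B \<subseteq> C"
  by (auto simp: ssum_def intro: submod_add)

lemma ssum_mono: "A \<subseteq> A' \<Longrightarrow> B \<subseteq> B' \<Longrightarrow> ssum A B \<subseteq> ssum A' B'"
  by (auto simp: ssum_def)

lemma ssum_zero_right: "ssum A {0} = A"
  by (auto simp: ssum_def)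

lemma ssum_eq_right: "submod act M B \<Longrightarrow> A \<subseteq> B \<Longrightarrow> 0 \<in> A \<Longrightarrow> ssum A B = B"
  using ssum_least[of act M B A B] ssum_upper2[of A B] by blast

lemma submod_ssum:
  assumes M: "module_on act M" and A: "submod act M A" and B: "submod act M B"
  shows "submod act M (ssum A B)"
  unfolding submod_def
proof (intro conjI ballI allI)
  show "ssum A B \<subseteq> M"
    using ssum_least[OF submod_carrier[OF M]] submod_subset[OF A] submod_subset[OF B] .
  show "0 \<in> ssum A B"
    using ssumI[OF submod_zero_mem[OF A] submod_zero_mem[OF B]] by simp
next
  fix x y assume "x \<in> ssum A B" "y \<in> ssum A B"
  then obtain x1 x2 y1 y2 where "x = x1 + x2" "y = y1 + y2" "x1 \<in> A" "x2 \<in> B" "y1 \<in> A" "y2 \<in> B"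
    by (auto elim!: ssumE)
  then have "x + y = (x1 + y1) + (x2 + y2)" "x1 + y1 \<in> A" "x2 + y2 \<in> B"
    using submod_add[OF A] submod_add[OF B] by (simp_all add: algebra_simps)
  then show "x + y \<in> ssum A B" by (metis ssumI)
next
  fix x assume "x \<in> ssum A B"
  then obtain x1 x2 where "x = x1 + x2" "x1 \<in> A" "x2 \<in> B"
    by (auto elim!: ssumE)
  then show "- x \<in> ssum A B"
    using ssumI[OF submod_neg[OF A] submod_neg[OF B]] by (simp add: algebra_simps)
next
  fix r x assume "x \<in> ssum A B"
  then obtain x1 x2 where "x = x1 + x2" "x1 \<in> A" "x2 \<in> B"
    by (auto elim!: ssumE)
  then show "act r x \<in> ssum A B"
    using ssumI[OF submod_act[OF A] submod_act[OF B]] act_add[OF M] submod_subset[OF A] submod_subset[OF B]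
    by (metis subsetD)
qed

lemma ssum_Int_modular:
  assumes C: "submod act M C" and AC: "A \<subseteq> C"
  shows "C \<inter> ssum A B = ssum A (C \<inter> B)"
proof
  show "C \<inter> ssum A B \<subseteq> ssum A (C \<inter> B)"
  proof
    fix z assume z: "z \<in> C \<inter> ssum A B"
    then obtain x y where "z = x + y" "x \<in> A" "y \<in> B" by (auto elim: ssumE)
    moreover have "y \<in> C" using submod_add_cancel_left[OF C, of x y] z calculation AC by auto
    ultimately show "z \<in> ssum A (C \<inter> B)" by (auto intro: ssumI)
  qed
  show "ssum A (C \<inter> B) \<subseteq> C \<inter> ssum A B"
    using ssum_least[OF C, of A "C \<inter> B"] AC ssum_mono[of A A "C \<inter> B" B] by auto
qed

section \<open>Refinement to composition series\<close>

lemma ssum_Int_between_simple_step: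
  assumes M: "module_on act M" and ss: "simple_sq act M s s'"
    and A: "submod act M A" and B: "submod act M B" and AB: "A \<subseteq> B"
    and C: "submod act M C" and XC: "ssum A (B \<inter> s) \<subseteq> C" and CY: "C \<subseteq> ssum A (B \<inter> s')"
  shows "C = ssum A (B \<inter> s) \<or> C = ssum A (B \<inter> s')"
proof -
  have S: "submod act M s" and S': "submod act M s'" and ss': "s \<subseteq> s'"
    and smax: "\<And>c. submod act M c \<Longrightarrow> s \<subseteq> c \<Longrightarrow> c \<subseteq> s' \<Longrightarrow> c = s \<or> c = s'"
    using ss by (auto simp: simple_sq_def)
  have AC: "A \<subseteq> C"
    using ssum_upper1[of "B \<inter> s" A] submod_zero_mem[OF B] submod_zero_mem[OF S] XC by blast
  have BsC: "B \<inter> s \<subseteq> C"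
    using ssum_upper2[OF submod_zero_mem[OF A]] XC by blast
  have CB: "C \<subseteq> B"
    using ssum_least[OF B AB] CY by blast
  have Cs': "submod act M (C \<inter> s')" using submod_Int[OF C S'] .
  have "C = C \<inter> ssum A (B \<inter> s')" using CY by blast
  also have "\<dots> = ssum A (C \<inter> (B \<inter> s'))" using ssum_Int_modular[OF C AC] .
  also have "C \<inter> (B \<inter> s') = C \<inter> s'" using CB by blast
  finally have C_eq: "C = ssum A (C \<inter> s')" .
  have "s \<subseteq> ssum s (C \<inter> s')"
    using ssum_upper1[OF submod_zero_mem[OF Cs']] .
  moreover have "ssum s (C \<inter> s') \<subseteq> s'"
    using ssum_least[OF S' ss'] by blast
  ultimately consider "ssum s (C \<inter> s') = s" | "ssum s (C \<inter> s') = s'"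
    using smax[OF submod_ssum[OF M S Cs']] by blast
  then show ?thesis
  proof cases
    case 1
    then have "C \<inter> s' \<subseteq> B \<inter> s"
      using ssum_upper2[OF submod_zero_mem[OF S], of "C \<inter> s'"] CB by blast
    then have "C \<subseteq> ssum A (B \<inter> s)"
      by (subst C_eq) (rule ssum_mono[OF order.refl])
    with XC show ?thesis by blast
  next
    case 2
    have "B \<inter> s' = B \<inter> ssum (C \<inter> s') s"
      using 2 by (simp add: ssum_commute)
    also have "\<dots> = ssum (C \<inter> s') (B \<inter> s)"
      using CB by (intro ssum_Int_modular[OF B]) blast
    also have "\<dots> \<subseteq> C"
      using BsC by (intro ssum_least[OF C]) blast+
    finally have "ssum A (B \<inter> s') \<subseteq> C"
      using AC by (intro ssum_least[OF C])
    with CY show ?thesis by blast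
  qed
qed

lemma ssum_Int_simple_step:
  assumes M: "module_on act M" and ss: "simple_sq act M s s'"
    and A: "submod act M A" and B: "submod act M B" and AB: "A \<subseteq> B"
  shows "ssum A (B \<inter> s) = ssum A (B \<inter> s') \<or> simple_sq act M (ssum A (B \<inter> s)) (ssum A (B \<inter> s'))"
proof -
  have S: "submod act M s" and S': "submod act M s'" and "s \<subseteq> s'"
    using ss by (auto simp: simple_sq_def)
  then have "ssum A (B \<inter> s) \<subseteq> ssum A (B \<inter> s')" by (intro ssum_mono) auto
  moreover have "submod act M (ssum A (B \<inter> s))" "submod act M (ssum A (B \<inter> s'))"
    using submod_ssum[OF M A submod_Int[OF B S]] submod_ssum[OF M A submod_Int[OF B S']] .
  ultimately show ?thesis
    using ssum_Int_between_simple_step[OF M ss A B AB] unfolding simple_sq_def by blast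
qed

lemma simple_chain_exists:
  assumes M: "module_on act M" and fl: "finite_length act M"
    and A: "submod act M A" and B: "submod act M B" and AB: "A \<subseteq> B"
  shows "\<exists>xs. xs \<noteq> [] \<and> hd xs = A \<and> last xs = B \<and> successively (simple_sq act M) xs"
proof -
  obtain s k where cs: "comp_series act M s k" using fl by (auto simp: finite_length_def)
  have "\<exists>xs. xs \<noteq> [] \<and> hd xs = A \<and> last xs = ssum A (B \<inter> s i) \<and> successively (simple_sq act M) xs"
    if "i \<le> k" for i
    using that
  proof (induction i)
    case 0
    have "ssum A (B \<inter> s 0) = A"
      using cs submod_zero_mem[OF B] ssum_zero_right by (auto simp: comp_series_def Int_absorb1)
    then show ?case by (intro exI[of _ "[A]"]) auto
  next
    case (Suc i)
    then obtain xs where xs: "xs \<noteq> []" "hd xs = A" "last xs = ssum A (B \<inter> s i)"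
        "successively (simple_sq act M) xs"
      by auto
    have "simple_sq act M (s i) (s (Suc i))" using cs Suc.prems by (simp add: comp_series_def)
    from ssum_Int_simple_step[OF M this A B AB] show ?case
    proof
      assume "ssum A (B \<inter> s i) = ssum A (B \<inter> s (Suc i))"
      then show ?case using xs by metis
    next
      assume "simple_sq act M (ssum A (B \<inter> s i)) (ssum A (B \<inter> s (Suc i)))"
      then show ?case
        using xs by (intro exI[of _ "xs @ [ssum A (B \<inter> s (Suc i))]"]) (auto simp: successively_append_iff)
    qed
  qed
  from this[OF order.refl] show ?thesis
    using cs submod_subset[OF B] ssum_eq_right[OF B AB submod_zero_mem[OF A]]
    by (simp add: comp_series_def Int_absorb2)
qed

lemma mult_free_not_sq_iso:
  assumes M: "module_on act M" and fl: "finite_length act M" and mf: "mult_free act M"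
    and s1: "simple_sq act M P1 Q1" and s2: "simple_sq act M P2 Q2" and QP: "Q1 \<subseteq> P2"
  shows "\<not> sq_iso act P1 Q1 P2 Q2"
proof -
  have P1: "submod act M P1" and Q1: "submod act M Q1" and P2: "submod act M P2" and Q2: "submod act M Q2"
    using s1 s2 by (auto simp: simple_sq_def)
  obtain c1 where c1: "c1 \<noteq> []" "hd c1 = {0}" "last c1 = P1" "successively (simple_sq act M) c1"
    using simple_chain_exists[OF M fl submod_zero[OF M] P1] submod_zero_mem[OF P1] by auto
  obtain c2 where c2: "c2 \<noteq> []" "hd c2 = Q1" "last c2 = P2" "successively (simple_sq act M) c2"
    using simple_chain_exists[OF M fl Q1 P2 QP] by auto
  obtain c3 where c3: "c3 \<noteq> []" "hd c3 = Q2" "last c3 = M" "successively (simple_sq act M) c3"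
    using simple_chain_exists[OF M fl Q2 submod_carrier[OF M] submod_subset[OF Q2]] by auto
  define xs where "xs = c1 @ c2 @ c3"
  have "successively (simple_sq act M) xs" "hd xs = {0}" "last xs = M" "xs \<noteq> []"
    unfolding xs_def using c1 c2 c3 s1 s2 by (auto simp: successively_append_iff)
  then have cs: "comp_series act M (nth xs) (length xs - 1)"
    unfolding comp_series_def by (auto simp: hd_conv_nth last_conv_nth intro: successively_nth)
  define i where "i = length c1 - 1"
  define j where "j = length c1 + (length c2 - 1)"
  have "xs ! i = P1" "xs ! Suc i = Q1"
    unfolding xs_def i_def using c1 c2 by (simp_all add: nth_append hd_conv_nth last_conv_nth)
  moreover have "xs ! j = P2" "xs ! Suc j = Q2"
    unfolding xs_def j_def using c2 c3 by (simp_all add: nth_append hd_conv_nth last_conv_nth)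
  moreover have ij: "i < j" "j < length xs - 1"
    unfolding i_def j_def xs_def using c1 c2 c3 by (simp_all add: Suc_le_eq flip: length_greater_0_conv)
  moreover have "\<not> sq_iso act (xs ! i) (xs ! Suc i) (xs ! j) (xs ! Suc j)"
    using mf cs ij unfolding mult_free_def by blast
  ultimately show ?thesis by simp
qed

section \<open>Morphisms of subquotients\<close>

lemma qhom_mem: "qhom act a b c d g \<Longrightarrow> x \<in> b \<Longrightarrow> g x \<in> d"
  by (simp add: qhom_def)

lemma qhom_add: "qhom act a b c d g \<Longrightarrow> x \<in> b \<Longrightarrow> y \<in> b \<Longrightarrow> g (x + y) - (g x + g y) \<in> c"
  by (simp add: qhom_def)

lemma qhom_act: "qhom act a b c d g \<Longrightarrow> x \<in> b \<Longrightarrow> g (act r x) - act r (g x) \<in> c"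
  by (simp add: qhom_def)

lemma qhom_base: "qhom act a b c d g \<Longrightarrow> x \<in> a \<Longrightarrow> g x \<in> c"
  by (simp add: qhom_def)

lemma qhom_mono: "qhom act a b c d g \<Longrightarrow> a' \<subseteq> a \<Longrightarrow> b' \<subseteq> b \<Longrightarrow> d \<subseteq> d' \<Longrightarrow> qhom act a' b' c d' g"
  unfolding qhom_def by blast

lemma qhom_diff:
  assumes g: "qhom act a b c d g" and b: "submod act M b" and c: "submod act M c"
    and x: "x \<in> b" and y: "y \<in> b"
  shows "g (x - y) - (g x - g y) \<in> c"
  using submod_neg[OF c qhom_add[OF g submod_diff[OF b x y] y]] by (simp add: algebra_simps)

lemma qhom_neg:
  assumes g: "qhom act a b c d g" and a: "submod act M a" and b: "submod act M b" and c: "submod act M c"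
    and x: "x \<in> b"
  shows "g (- x) + g x \<in> c"
proof -
  have "g (- x) + g x = (g (0 - x) - (g 0 - g x)) + g 0" by simp
  also have "\<dots> \<in> c"
    using qhom_diff[OF g b c submod_zero_mem[OF b] x] qhom_base[OF g submod_zero_mem[OF a]]
    by (rule submod_add[OF c])
  finally show ?thesis .
qed

lemma qhom_cong:
  assumes g: "qhom act a b c d g" and b: "submod act M b" and c: "submod act M c" and ab: "a \<subseteq> b"
    and x: "x \<in> b" and y: "y \<in> b" and xy: "x - y \<in> a"
  shows "g x - g y \<in> c"
  using submod_diff_cancel_right[OF c qhom_base[OF g xy]] qhom_diff[OF g b c x y]
  by (metis minus_diff_eq submod_neg[OF c])

lemma qhom_reflect:
  assumes g: "qhom act a b c d g" and inj: "\<forall>x\<in>b. g x \<in> c \<longrightarrow> x \<in> a"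
    and b: "submod act M b" and c: "submod act M c"
    and x: "x \<in> b" and y: "y \<in> b" and gxy: "g x - g y \<in> c"
  shows "x - y \<in> a"
  using inj submod_diff[OF b x y] submod_diff_cancel_right[OF c gxy qhom_diff[OF g b c x y]] by blast

lemma qhom_comp:
  assumes h: "qhom act A B a b h" and g: "qhom act a b c d g"
    and B: "submod act M B" and b: "submod act M b" and c: "submod act M c" and ab: "a \<subseteq> b"
  shows "qhom act A B c d (g \<circ> h)"
  unfolding qhom_def
proof (intro conjI ballI allI)
  fix x assume x: "x \<in> B"
  show "(g \<circ> h) x \<in> d" using qhom_mem[OF g qhom_mem[OF h x]] by simp
next
  fix x y assume x: "x \<in> B" and y: "y \<in> B"
  have hx: "h x \<in> b" "h y \<in> b" "h (x + y) \<in> b" "h x + h y \<in> b"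
    using qhom_mem[OF h] x y submod_add[OF B x y] submod_add[OF b] by auto
  have "g (h (x + y)) - g (h x + h y) \<in> c"
    using qhom_cong[OF g b c ab hx(3,4) qhom_add[OF h x y]] .
  from submod_add[OF c this qhom_add[OF g hx(1,2)]]
  show "(g \<circ> h) (x + y) - ((g \<circ> h) x + (g \<circ> h) y) \<in> c" by (simp add: algebra_simps)
next
  fix r x assume x: "x \<in> B"
  have hx: "h x \<in> b" "h (act r x) \<in> b" "act r (h x) \<in> b"
    using qhom_mem[OF h] x submod_act[OF B x] submod_act[OF b] by auto
  have "g (h (act r x)) - g (act r (h x)) \<in> c"
    using qhom_cong[OF g b c ab hx(2,3) qhom_act[OF h x]] .
  from submod_add[OF c this qhom_act[OF g hx(1), of r]]
  show "(g \<circ> h) (act r x) - act r ((g \<circ> h) x) \<in> c" by simp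
next
  fix x assume "x \<in> A"
  then show "(g \<circ> h) x \<in> c" using qhom_base[OF g qhom_base[OF h]] by simp
qed

lemma sq_iso_trans:
  assumes i1: "sq_iso act A B a b" and i2: "sq_iso act a b c d"
    and B: "submod act M B" and b: "submod act M b" and c: "submod act M c" and ab: "a \<subseteq> b"
  shows "sq_iso act A B c d"
proof -
  obtain h where h: "qhom act A B a b h" "\<forall>x\<in>B. h x \<in> a \<longrightarrow> x \<in> A" "\<forall>y\<in>b. \<exists>x\<in>B. y - h x \<in> a"
    using i1 by (auto simp: sq_iso_def)
  obtain g where g: "qhom act a b c d g" "\<forall>x\<in>b. g x \<in> c \<longrightarrow> x \<in> a" "\<forall>y\<in>d. \<exists>x\<in>b. y - g x \<in> c"
    using i2 by (auto simp: sq_iso_def)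
  have "qhom act A B c d (g \<circ> h)" by (rule qhom_comp[OF h(1) g(1) B b c ab])
  moreover have "\<forall>x\<in>B. (g \<circ> h) x \<in> c \<longrightarrow> x \<in> A" using h g qhom_mem[OF h(1)] by auto
  moreover have "\<exists>x\<in>B. y - (g \<circ> h) x \<in> c" if "y \<in> d" for y
  proof -
    obtain z where z: "z \<in> b" "y - g z \<in> c" using g(3) \<open>y \<in> d\<close> by auto
    then obtain x where x: "x \<in> B" "z - h x \<in> a" using h(3) by auto
    have "g z - g (h x) \<in> c" using qhom_cong[OF g(1) b c ab z(1) qhom_mem[OF h(1) x(1)] x(2)] .
    from submod_add[OF c z(2) this] x(1) show ?thesis by auto
  qed
  ultimately show ?thesis by (auto simp: sq_iso_def)
qed

lemma qhom_quasi_inverse: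
  assumes M: "module_on act M" and g: "qhom act A B C D g" and inj: "\<forall>x\<in>B. g x \<in> C \<longrightarrow> x \<in> A"
    and B: "submod act M B" and C: "submod act M C" and D: "submod act M D" and CD: "C \<subseteq> D"
    and h: "\<And>y. y \<in> D \<Longrightarrow> h y \<in> B \<and> y - g (h y) \<in> C"
  shows "qhom act C D A B h"
  unfolding qhom_def
proof (intro conjI ballI allI)
  fix y assume "y \<in> D"
  then show "h y \<in> B" using h by blast
next
  fix y z assume y: "y \<in> D" and z: "z \<in> D"
  have yz: "y + z \<in> D" using submod_add[OF D y z] .
  have hyz: "h y + h z \<in> B" using submod_add[OF B] h y z by blast
  have "g (h (y + z)) - g (h y + h z) =
      (y - g (h y)) + (z - g (h z)) - ((y + z) - g (h (y + z))) - (g (h y + h z) - (g (h y) + g (h z)))"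
    by (simp add: algebra_simps)
  also have "\<dots> \<in> C"
    using h[OF y] h[OF z] h[OF yz] qhom_add[OF g, of "h y" "h z"]
    by (blast intro: submod_diff[OF C] submod_add[OF C])
  finally show "h (y + z) - (h y + h z) \<in> A"
    using qhom_reflect[OF g inj B C _ hyz] h[OF yz] by blast
next
  fix r y assume y: "y \<in> D"
  have ry: "act r y \<in> D" using submod_act[OF D y] .
  have rhy: "act r (h y) \<in> B" using submod_act[OF B] h[OF y] by blast
  have "act r (y - g (h y)) = act r y - act r (g (h y))"
    using act_diff[OF M] y h[OF y] qhom_mem[OF g] submod_subset[OF D] by blast
  then have "g (h (act r y)) - g (act r (h y)) =
      act r (y - g (h y)) - (act r y - g (h (act r y))) - (g (act r (h y)) - act r (g (h y)))"
    by (simp add: algebra_simps)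
  also have "\<dots> \<in> C"
    using submod_act[OF C] h[OF y] h[OF ry] qhom_act[OF g, of "h y"]
    by (blast intro: submod_diff[OF C])
  finally show "h (act r y) - act r (h y) \<in> A"
    using qhom_reflect[OF g inj B C _ rhy] h[OF ry] by blast
next
  fix y assume y: "y \<in> C"
  then have "g (h y) \<in> C"
    using h CD submod_diff[OF C y, of "y - g (h y)"] by auto
  then show "h y \<in> A" using inj h CD y by blast
qed

lemma sq_iso_sym:
  assumes M: "module_on act M" and iso: "sq_iso act A B C D"
    and A: "submod act M A" and B: "submod act M B" and C: "submod act M C" and D: "submod act M D"
    and CD: "C \<subseteq> D"
  shows "sq_iso act C D A B"
proof -
  obtain g where g: "qhom act A B C D g" and inj: "\<forall>x\<in>B. g x \<in> C \<longrightarrow> x \<in> A"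
    and sur: "\<forall>y\<in>D. \<exists>x\<in>B. y - g x \<in> C"
    using iso by (auto simp: sq_iso_def)
  define h where "h y = (SOME x. x \<in> B \<and> y - g x \<in> C)" for y
  have h: "h y \<in> B \<and> y - g (h y) \<in> C" if "y \<in> D" for y
    unfolding h_def using someI_ex sur that by (metis (mono_tags, lifting))
  have "qhom act C D A B h" using qhom_quasi_inverse[OF M g inj B C D CD h] .
  moreover have "y \<in> C" if "y \<in> D" "h y \<in> A" for y
    using submod_diff_cancel_right[OF C qhom_base[OF g]] h that by blast
  moreover have "\<exists>y\<in>D. x - h y \<in> A" if x: "x \<in> B" for x
  proof -
    have gx: "g x \<in> D" using qhom_mem[OF g x] .
    have "h (g x) - x \<in> A"
      using qhom_reflect[OF g inj B C _ x, of "h (g x)"] h[OF gx] submod_diff_cancel_right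
      by (metis (no_types, lifting) C minus_diff_eq submod_neg)
    then show ?thesis using gx submod_neg[OF A] by fastforce
  qed
  ultimately show ?thesis unfolding sq_iso_def by blast
qed

lemma submod_qhom_preimage:
  assumes g: "qhom act A B C D g" and A: "submod act M A" and B: "submod act M B" and C: "submod act M C"
    and W: "submod act M W" and CW: "C \<subseteq> W" and AB: "A \<subseteq> B"
  shows "submod act M {x\<in>B. g x \<in> W}"
  unfolding submod_def
proof (intro conjI ballI allI)
  show "{x\<in>B. g x \<in> W} \<subseteq> M" using submod_subset[OF B] by auto
  show "0 \<in> {x\<in>B. g x \<in> W}" using submod_zero_mem[OF A] AB qhom_base[OF g] CW by auto
next
  fix x y assume "x \<in> {x\<in>B. g x \<in> W}" "y \<in> {x\<in>B. g x \<in> W}"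
  then have x: "x \<in> B" "g x \<in> W" and y: "y \<in> B" "g y \<in> W" by auto
  have "g (x + y) \<in> W"
    using submod_diff_cancel_right[OF W submod_add[OF W x(2) y(2)]] qhom_add[OF g x(1) y(1)] CW by blast
  then show "x + y \<in> {x\<in>B. g x \<in> W}" using submod_add[OF B x(1) y(1)] by auto
next
  fix x assume "x \<in> {x\<in>B. g x \<in> W}"
  then have x: "x \<in> B" "g x \<in> W" by auto
  have "g (- x) + g x \<in> W" using qhom_neg[OF g A B C x(1)] CW by blast
  from submod_diff[OF W this x(2)] have "g (- x) \<in> W" by simp
  then show "- x \<in> {x\<in>B. g x \<in> W}" using submod_neg[OF B x(1)] by auto
next
  fix r x assume "x \<in> {x\<in>B. g x \<in> W}"
  then have x: "x \<in> B" "g x \<in> W" by auto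
  have "g (act r x) \<in> W"
    using submod_diff_cancel_right[OF W submod_act[OF W x(2)]] qhom_act[OF g x(1)] CW by blast
  then show "act r x \<in> {x\<in>B. g x \<in> W}" using submod_act[OF B x(1)] by auto
qed

lemma simple_sq_transfer:
  assumes iso: "sq_iso act A B C D" and s: "simple_sq act M A B"
    and C: "submod act M C" and D: "submod act M D" and CD: "C \<subseteq> D"
  shows "simple_sq act M C D"
proof -
  obtain g where g: "qhom act A B C D g" and inj: "\<forall>x\<in>B. g x \<in> C \<longrightarrow> x \<in> A"
    and sur: "\<forall>y\<in>D. \<exists>x\<in>B. y - g x \<in> C"
    using iso by (auto simp: sq_iso_def)
  have A: "submod act M A" and B: "submod act M B" and AB: "A \<subset> B"
    and smax: "\<And>c. submod act M c \<Longrightarrow> A \<subseteq> c \<Longrightarrow> c \<subseteq> B \<Longrightarrow> c = A \<or> c = B"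
    using s by (auto simp: simple_sq_def)
  obtain x0 where x0: "x0 \<in> B" "x0 \<notin> A" using AB by auto
  then have "g x0 \<in> D - C" using inj qhom_mem[OF g] by auto
  then have "C \<subset> D" using CD by blast
  moreover have "W = C \<or> W = D" if W: "submod act M W" and CW: "C \<subseteq> W" and WD: "W \<subseteq> D" for W
  proof -
    define K where "K = {x\<in>B. g x \<in> W}"
    have "submod act M K" "A \<subseteq> K" "K \<subseteq> B"
      unfolding K_def using submod_qhom_preimage[OF g A B C W CW] AB qhom_base[OF g] CW by auto
    then consider "K = A" | "K = B" using smax by blast
    then show ?thesis
    proof cases
      case 1
      have "W \<subseteq> C"
      proof
        fix w assume w: "w \<in> W"
        then obtain x where x: "x \<in> B" "w - g x \<in> C" using sur WD by auto
        have "w - (w - g x) \<in> W" using submod_diff[OF W w] x(2) CW by blast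
        then have "g x \<in> W" by simp
        then have "g x \<in> C" using 1 x qhom_base[OF g] unfolding K_def by auto
        then show "w \<in> C" using submod_diff_cancel_right[OF C] x by blast
      qed
      then show ?thesis using CW by auto
    next
      case 2
      have "D \<subseteq> W"
      proof
        fix w assume w: "w \<in> D"
        then obtain x where x: "x \<in> B" "w - g x \<in> C" using sur by auto
        have "g x \<in> W" using 2 x unfolding K_def by auto
        then show "w \<in> W" using submod_diff_cancel_right[OF W] x CW by blast
      qed
      then show ?thesis using WD by auto
    qed
  qed
  ultimately show ?thesis using C D by (auto simp: simple_sq_def)
qed

lemma simple_sq_transfer_back:
  assumes M: "module_on act M" and iso: "sq_iso act A B C D" and s: "simple_sq act M C D"
    and A: "submod act M A" and B: "submod act M B" and AB: "A \<subseteq> B"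
  shows "simple_sq act M A B"
proof -
  have "submod act M C" "submod act M D" "C \<subseteq> D" using s by (auto simp: simple_sq_def)
  from simple_sq_transfer[OF sq_iso_sym[OF M iso A B this] s A B AB] show ?thesis .
qed

lemma ssum_qhom_imageI: "y - g x \<in> C \<Longrightarrow> x \<in> B \<Longrightarrow> y \<in> ssum C (g ` B)"
  using ssumI[of "y - g x" C "g x" "g ` B"] by simp

lemma submod_ssum_qhom_image:
  assumes M: "module_on act M" and g: "qhom act A B C D g"
    and A: "submod act M A" and B: "submod act M B" and C: "submod act M C" and D: "submod act M D"
    and CD: "C \<subseteq> D"
  shows "submod act M (ssum C (g ` B))"
  unfolding submod_def
proof (intro conjI ballI allI)
  have "g ` B \<subseteq> D" using qhom_mem[OF g] by blast
  then show "ssum C (g ` B) \<subseteq> M"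
    using ssum_least[OF D CD] submod_subset[OF D] by blast
  show "0 \<in> ssum C (g ` B)"
    using ssum_qhom_imageI[of 0 g 0 C B] submod_zero_mem[OF B]
      submod_neg[OF C qhom_base[OF g submod_zero_mem[OF A]]]
    by simp
next
  fix y z assume "y \<in> ssum C (g ` B)" "z \<in> ssum C (g ` B)"
  then obtain c x c' x' where yz: "y = c + g x" "z = c' + g x'" "c \<in> C" "c' \<in> C" "x \<in> B" "x' \<in> B"
    by (auto elim!: ssumE)
  have "y + z - g (x + x') = (c + c') - (g (x + x') - (g x + g x'))"
    using yz by (simp add: algebra_simps)
  also have "\<dots> \<in> C" using submod_diff[OF C submod_add[OF C yz(3,4)] qhom_add[OF g yz(5,6)]] .
  finally show "y + z \<in> ssum C (g ` B)"
    by (rule ssum_qhom_imageI[of _ g, OF _ submod_add[OF B yz(5,6)]])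
next
  fix y assume "y \<in> ssum C (g ` B)"
  then obtain c x where y: "y = c + g x" "c \<in> C" "x \<in> B" by (auto elim!: ssumE)
  have "- y - g (- x) = - c - (g (- x) + g x)"
    using y by (simp add: algebra_simps)
  also have "\<dots> \<in> C" using submod_diff[OF C submod_neg[OF C y(2)] qhom_neg[OF g A B C y(3)]] .
  finally show "- y \<in> ssum C (g ` B)"
    by (rule ssum_qhom_imageI[of _ g, OF _ submod_neg[OF B y(3)]])
next
  fix r y assume "y \<in> ssum C (g ` B)"
  then obtain c x where y: "y = c + g x" "c \<in> C" "x \<in> B" by (auto elim!: ssumE)
  have "c \<in> M" "g x \<in> M"
    using y CD qhom_mem[OF g] submod_subset[OF D] by auto
  with y have "act r y = act r c + act r (g x)"
    using act_add[OF M] by simp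
  then have "act r y - g (act r x) = act r c - (g (act r x) - act r (g x))"
    by (simp add: algebra_simps)
  also have "\<dots> \<in> C" using submod_diff[OF C submod_act[OF C y(2)] qhom_act[OF g y(3)]] .
  finally show "act r y \<in> ssum C (g ` B)"
    by (rule ssum_qhom_imageI[of _ g, OF _ submod_act[OF B y(3)]])
qed

lemma qhom_simple_image:
  assumes M: "module_on act M" and g: "qhom act A B C D g" and nz: "\<exists>x\<in>B. g x \<notin> C"
    and s: "simple_sq act M A B" and C: "submod act M C" and D: "submod act M D" and CD: "C \<subseteq> D"
  shows "\<exists>V. simple_sq act M C V \<and> V \<subseteq> D \<and> sq_iso act A B C V"
proof -
  have A: "submod act M A" and B: "submod act M B" and AB: "A \<subseteq> B"
    and smax: "\<And>c. submod act M c \<Longrightarrow> A \<subseteq> c \<Longrightarrow> c \<subseteq> B \<Longrightarrow> c = A \<or> c = B"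
    using s by (auto simp: simple_sq_def)
  define V where "V = ssum C (g ` B)"
  have V: "submod act M V" unfolding V_def using submod_ssum_qhom_image[OF M g A B C D CD] .
  have CV: "C \<subseteq> V"
    unfolding V_def
    using ssum_qhom_imageI[of _ g 0, OF submod_diff[OF C _ qhom_base[OF g submod_zero_mem[OF A]]]]
      submod_zero_mem[OF B] by blast
  have "g ` B \<subseteq> D" using qhom_mem[OF g] by blast
  then have VD: "V \<subseteq> D" unfolding V_def using ssum_least[OF D CD] by blast
  have gV: "qhom act A B C V g"
    using g ssum_qhom_imageI[of "g x" g x C B for x] submod_zero_mem[OF C] unfolding qhom_def V_def by auto
  have "{x\<in>B. g x \<in> C} = A"
    using smax[OF submod_qhom_preimage[OF g A B C C order.refl AB]] nz AB qhom_base[OF g] by blast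
  then have "\<forall>x\<in>B. g x \<in> C \<longrightarrow> x \<in> A" by blast
  moreover have "\<exists>x\<in>B. y - g x \<in> C" if "y \<in> V" for y
  proof -
    from that obtain c x where "y = c + g x" "c \<in> C" "x \<in> B" unfolding V_def by (auto elim!: ssumE)
    then show ?thesis by force
  qed
  ultimately have iso: "sq_iso act A B C V" using gV unfolding sq_iso_def by blast
  then show ?thesis using simple_sq_transfer[OF iso s C V CV] VD by blast
qed

lemma qhom_projection:
  assumes M: "module_on act M" and T: "submod act M T" and E: "submod act M E"
    and g: "\<And>x. x \<in> ssum T E \<Longrightarrow> g x \<in> E \<and> x - g x \<in> T"
  shows "qhom act T (ssum T E) (T \<inter> E) E g"
proof -
  have unique: "g x - e \<in> T \<inter> E" if x: "x \<in> ssum T E" and e: "e \<in> E" "x - e \<in> T" for x e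
  proof -
    have "g x - e \<in> E" using submod_diff[OF E _ e(1)] g[OF x] by blast
    moreover have "(x - e) - (x - g x) \<in> T" using submod_diff[OF T e(2)] g[OF x] by blast
    ultimately show ?thesis by simp
  qed
  have S: "submod act M (ssum T E)" using submod_ssum[OF M T E] .
  show ?thesis
    unfolding qhom_def
  proof (intro conjI ballI allI)
    fix x assume "x \<in> ssum T E"
    then show "g x \<in> E" using g by blast
  next
    fix x y assume x: "x \<in> ssum T E" and y: "y \<in> ssum T E"
    have "g x + g y \<in> E" using submod_add[OF E] g[OF x] g[OF y] by blast
    moreover have "(x - g x) + (y - g y) \<in> T" using submod_add[OF T] g[OF x] g[OF y] by blast
    then have "(x + y) - (g x + g y) \<in> T" by (simp add: algebra_simps)
    ultimately show "g (x + y) - (g x + g y) \<in> T \<inter> E"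
      by (rule unique[OF submod_add[OF S x y]])
  next
    fix r x assume x: "x \<in> ssum T E"
    have "x \<in> M" "g x \<in> M" using x g[OF x] submod_subset[OF S] submod_subset[OF E] by auto
    then have "act r x - act r (g x) = act r (x - g x)" using act_diff[OF M] by simp
    then show "g (act r x) - act r (g x) \<in> T \<inter> E"
      using unique[OF submod_act[OF S x]] submod_act[OF E] submod_act[OF T] g[OF x] by simp
  next
    fix x assume "x \<in> T"
    then show "g x \<in> T \<inter> E"
      using unique[of x 0] ssum_upper1[OF submod_zero_mem[OF E]] submod_zero_mem[OF E] by auto
  qed
qed

lemma sq_iso_ssum_Int:
  assumes M: "module_on act M" and T: "submod act M T" and E: "submod act M E"
  shows "sq_iso act T (ssum T E) (T \<inter> E) E"
proof -
  define g where "g x = (SOME e. e \<in> E \<and> x - e \<in> T)" for x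
  have g: "g x \<in> E \<and> x - g x \<in> T" if "x \<in> ssum T E" for x
  proof -
    from that obtain t e where "x = t + e" "t \<in> T" "e \<in> E" by (rule ssumE)
    then have "\<exists>e. e \<in> E \<and> x - e \<in> T" by auto
    then show ?thesis unfolding g_def by (rule someI_ex)
  qed
  have "qhom act T (ssum T E) (T \<inter> E) E g" using qhom_projection[OF M T E g] .
  moreover have "x \<in> T" if "x \<in> ssum T E" "g x \<in> T \<inter> E" for x
    using submod_add[OF T] g[OF that(1)] that(2) by (metis IntD1 diff_add_cancel)
  moreover have "\<exists>x\<in>ssum T E. e - g x \<in> T \<inter> E" if e: "e \<in> E" for e
  proof -
    have eS: "e \<in> ssum T E" using ssum_upper2[OF submod_zero_mem[OF T]] e by blast
    then have "e - g e \<in> T \<inter> E" using g submod_diff[OF E e] by blast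
    then show ?thesis using eS by blast
  qed
  ultimately show ?thesis unfolding sq_iso_def by blast
qed

lemma semisimple_sq_complement:
  assumes ss: "semisimple_sq act M P' P" and T: "submod act M T" and P: "submod act M P"
    and P'T: "P' \<subseteq> T" and P'P: "P' \<subseteq> P"
  shows "\<exists>E. submod act M E \<and> P' \<subseteq> E \<and> E \<subseteq> P \<and> T \<inter> E = P' \<and> P \<subseteq> ssum T E"
proof -
  obtain E where E: "submod act M E" "P' \<subseteq> E" "E \<subseteq> P" "(T \<inter> P) \<inter> E = P'" "ssum (T \<inter> P) E = P"
    using ss submod_Int[OF T P] P'T P'P unfolding semisimple_sq_def by (meson Int_greatest Int_lower2)
  have "T \<inter> E = P'" using E(3,4) by blast
  moreover have "P \<subseteq> ssum T E" using E(5) ssum_mono[of "T \<inter> P" T E E] by blast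
  ultimately show ?thesis using E(1-3) by blast
qed

section \<open>The degree of a simple subquotient\<close>

lemma incr_filtration_submod: "incr_filtration act M F \<Longrightarrow> submod act M (F n)"
  by (simp add: incr_filtration_def)

lemma incr_filtration_mono:
  assumes F: "incr_filtration act M F" and ij: "i \<le> j"
  shows "F i \<subseteq> F j"
  using ij
proof (induction j rule: int_ge_induct)
  case base
  then show ?case by simp
next
  case (step j)
  then show ?case using F unfolding incr_filtration_def by blast
qed

lemma incr_filtration_zero_below:
  assumes F: "incr_filtration act M F"
  shows "\<exists>n0. \<forall>j\<le>n0. F j = {0}"
proof -
  obtain n0 where n0: "F n0 = {0}" using F by (auto simp: incr_filtration_def)
  have "F j = {0}" if "j \<le> n0" for j
    using incr_filtration_mono[OF F that] n0 submod_zero_mem[OF incr_filtration_submod[OF F]] by blast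
  then show ?thesis by blast
qed

lemma semisimple_filtrationD:
  assumes "semisimple_filtration act M F"
  shows "incr_filtration act M F" "semisimple_sq act M (F (n - 1)) (F n)"
  using assms by (simp_all add: semisimple_filtration_def)

lemma exists_level:
  assumes F: "incr_filtration act M F" and A: "submod act M A" and B: "submod act M B"
    and BA: "\<not> B \<subseteq> A"
  shows "\<exists>k. B \<subseteq> ssum A (F k) \<and> \<not> B \<subseteq> ssum A (F (k - 1))"
proof (rule ccontr)
  assume "\<not> ?thesis"
  then have down: "B \<subseteq> ssum A (F k) \<Longrightarrow> B \<subseteq> ssum A (F (k - 1))" for k by blast
  obtain n1 where n1: "F n1 = M" using F by (auto simp: incr_filtration_def)
  obtain n0 where n0: "\<forall>j\<le>n0. F j = {0}" using incr_filtration_zero_below[OF F] by blast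
  have top: "B \<subseteq> ssum A (F n1)"
    using n1 submod_subset[OF B] ssum_upper2[OF submod_zero_mem[OF A]] by blast
  have "B \<subseteq> ssum A (F i)" if "i \<le> n1" for i
    using that by (induction i rule: int_le_induct) (use top down in auto)
  then have "B \<subseteq> ssum A (F (min n0 n1))" by simp
  moreover have "F (min n0 n1) = {0}" using n0 by simp
  ultimately have "B \<subseteq> A" by (simp add: ssum_zero_right)
  with BA show False ..
qed

definition has_degree :: "('r::ring_1 \<Rightarrow> 'm::ab_group_add \<Rightarrow> 'm) \<Rightarrow> (int \<Rightarrow> 'm set) \<Rightarrow> 'm set \<Rightarrow> 'm set \<Rightarrow> int \<Rightarrow> bool"
  where "has_degree act F a b n \<longleftrightarrow> (\<exists>g. qhom act a b (F (n - 1)) (F n) g \<and> (\<exists>x\<in>b. g x \<notin> F (n - 1)))"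

lemma has_degree_at_level:
  assumes M: "module_on act M" and F: "semisimple_filtration act M F"
    and A: "submod act M A" and B: "submod act M B"
    and up: "B \<subseteq> ssum A (F k)" and not_below: "\<not> B \<subseteq> ssum A (F (k - 1))"
  shows "has_degree act F A B k"
proof -
  have Fk: "submod act M (F k)" and Fk1: "submod act M (F (k - 1))"
    using incr_filtration_submod[OF semisimple_filtrationD(1)[OF F]] by auto
  define T where "T = ssum A (F (k - 1))"
  have T: "submod act M T" unfolding T_def using submod_ssum[OF M A Fk1] .
  have AT: "A \<subseteq> T" unfolding T_def using ssum_upper1[OF submod_zero_mem[OF Fk1]] .
  have FT: "F (k - 1) \<subseteq> T" unfolding T_def using ssum_upper2[OF submod_zero_mem[OF A]] .
  have "F (k - 1) \<subseteq> F k" using incr_filtration_mono[OF semisimple_filtrationD(1)[OF F]] by simp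
  then obtain E where E: "submod act M E" "F (k - 1) \<subseteq> E" "E \<subseteq> F k" "T \<inter> E = F (k - 1)"
      "F k \<subseteq> ssum T E"
    using semisimple_sq_complement[OF semisimple_filtrationD(2)[OF F] T Fk FT] by blast
  obtain g where g: "qhom act T (ssum T E) (F (k - 1)) E g"
    and ker: "\<forall>x\<in>ssum T E. g x \<in> F (k - 1) \<longrightarrow> x \<in> T"
    using sq_iso_ssum_Int[OF M T E(1)] E(4) unfolding sq_iso_def by auto
  have "T \<subseteq> ssum T E" using ssum_upper1[OF submod_zero_mem[OF E(1)]] .
  then have "ssum A (F k) \<subseteq> ssum T E"
    using AT E(5) by (intro ssum_least[OF submod_ssum[OF M T E(1)]]) auto
  with up have "B \<subseteq> ssum T E" by (rule order.trans)
  then have "qhom act A B (F (k - 1)) (F k) g" using qhom_mono[OF g AT _ E(3)] by blast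
  moreover obtain x where "x \<in> B" "x \<notin> T" using not_below unfolding T_def by blast
  then have "g x \<notin> F (k - 1)" using ker \<open>B \<subseteq> ssum T E\<close> by blast
  ultimately show ?thesis unfolding has_degree_def using \<open>x \<in> B\<close> by blast
qed

lemma has_degree_unique:
  assumes M: "module_on act M" and fl: "finite_length act M" and mf: "mult_free act M"
    and F: "semisimple_filtration act M F" and s: "simple_sq act M A B"
    and i: "has_degree act F A B i" and j: "has_degree act F A B j"
  shows "i = j"
proof -
  have A: "submod act M A" and B: "submod act M B" and AB: "A \<subseteq> B" using s by (auto simp: simple_sq_def)
  have Fn: "submod act M (F n)" for n
    using incr_filtration_submod[OF semisimple_filtrationD(1)[OF F]] .
  have Fmono: "m \<le> n \<Longrightarrow> F m \<subseteq> F n" for m n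
    using incr_filtration_mono[OF semisimple_filtrationD(1)[OF F]] .
  have image: "\<exists>V. simple_sq act M (F (n - 1)) V \<and> V \<subseteq> F n \<and> sq_iso act A B (F (n - 1)) V"
    if dn: "has_degree act F A B n" for n
  proof -
    obtain g where "qhom act A B (F (n - 1)) (F n) g" "\<exists>x\<in>B. g x \<notin> F (n - 1)"
      using dn unfolding has_degree_def by blast
    then show ?thesis using qhom_simple_image[OF M _ _ s Fn Fn Fmono[of "n - 1" n]] by simp
  qed
  have not_less: "\<not> i < j" if di: "has_degree act F A B i" and dj: "has_degree act F A B j" for i j
  proof -
    obtain V where V: "simple_sq act M (F (i - 1)) V" "V \<subseteq> F i" "sq_iso act A B (F (i - 1)) V"
      using image[OF di] by blast
    obtain W where W: "simple_sq act M (F (j - 1)) W" "sq_iso act A B (F (j - 1)) W"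
      using image[OF dj] by blast
    have V': "submod act M V" "F (i - 1) \<subseteq> V" using V(1) by (auto simp: simple_sq_def)
    have W': "submod act M W" using W(1) by (auto simp: simple_sq_def)
    have "sq_iso act (F (i - 1)) V (F (j - 1)) W"
      using sq_iso_trans[OF sq_iso_sym[OF M V(3) A B Fn V'] W(2) V'(1) B Fn AB] .
    moreover have "V \<subseteq> F (j - 1)" if "i < j" using V(2) Fmono[of i "j - 1"] that by auto
    ultimately show ?thesis using mult_free_not_sq_iso[OF M fl mf V(1) W(1)] by blast
  qed
  show "i = j" using not_less[OF i j] not_less[OF j i] by simp
qed

lemma has_degree_sq_iso:
  assumes iso: "sq_iso act A B a b" and d: "has_degree act F a b n"
    and F: "incr_filtration act M F" and B: "submod act M B" and b: "submod act M b" and ab: "a \<subseteq> b"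
  shows "has_degree act F A B n"
proof -
  obtain g z where g: "qhom act a b (F (n - 1)) (F n) g" and z: "z \<in> b" "g z \<notin> F (n - 1)"
    using d unfolding has_degree_def by blast
  obtain h where h: "qhom act A B a b h" and sur: "\<forall>y\<in>b. \<exists>x\<in>B. y - h x \<in> a"
    using iso unfolding sq_iso_def by blast
  have F1: "submod act M (F (n - 1))" using incr_filtration_submod[OF F] .
  obtain x where x: "x \<in> B" "z - h x \<in> a" using sur z(1) by blast
  have "g z - g (h x) \<in> F (n - 1)" using qhom_cong[OF g b F1 ab z(1) qhom_mem[OF h x(1)] x(2)] .
  then have "(g \<circ> h) x \<notin> F (n - 1)" using z(2) submod_diff_cancel_right[OF F1, of "g (h x)"] by auto
  moreover have "qhom act A B (F (n - 1)) (F n) (g \<circ> h)" using qhom_comp[OF h g B b F1 ab] .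
  ultimately show ?thesis unfolding has_degree_def using x(1) by blast
qed

lemma dF_eqI:
  assumes M: "module_on act M" and fl: "finite_length act M" and mf: "mult_free act M"
    and F: "semisimple_filtration act M F" and s: "simple_sq act M A B"
    and d: "has_degree act F A B n"
  shows "dF act F A B = n"
proof -
  have "dF act F A B = (THE n. has_degree act F A B n)" by (simp add: dF_def has_degree_def)
  also have "\<dots> = n" using d has_degree_unique[OF M fl mf F s] by blast
  finally show ?thesis .
qed

lemma dF_level:
  assumes M: "module_on act M" and fl: "finite_length act M" and mf: "mult_free act M"
    and F: "semisimple_filtration act M F" and s: "simple_sq act M A B"
  shows "B \<subseteq> ssum A (F (dF act F A B))" and "\<not> B \<subseteq> ssum A (F (dF act F A B - 1))"
proof -
  have A: "submod act M A" and B: "submod act M B" and "\<not> B \<subseteq> A" using s by (auto simp: simple_sq_def)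
  then obtain k where k: "B \<subseteq> ssum A (F k)" "\<not> B \<subseteq> ssum A (F (k - 1))"
    using exists_level[OF semisimple_filtrationD(1)[OF F]] by blast
  have "dF act F A B = k" using dF_eqI[OF M fl mf F s has_degree_at_level[OF M F A B k]] .
  then show "B \<subseteq> ssum A (F (dF act F A B))" and "\<not> B \<subseteq> ssum A (F (dF act F A B - 1))"
    using k by simp_all
qed

lemma dF_sq_iso:
  assumes M: "module_on act M" and fl: "finite_length act M" and mf: "mult_free act M"
    and F: "semisimple_filtration act M F" and s: "simple_sq act M A B" and s': "simple_sq act M a b"
    and iso: "sq_iso act A B a b"
  shows "dF act F A B = dF act F a b"
proof -
  have B: "submod act M B" using s by (simp add: simple_sq_def)
  have a: "submod act M a" and b: "submod act M b" and "a \<subseteq> b" using s' by (auto simp: simple_sq_def)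
  have "has_degree act F a b (dF act F a b)"
    using has_degree_at_level[OF M F a b dF_level[OF M fl mf F s']] .
  then have "has_degree act F A B (dF act F a b)"
    using has_degree_sq_iso[OF iso _ semisimple_filtrationD(1)[OF F] B b \<open>a \<subseteq> b\<close>] by blast
  then show ?thesis by (rule dF_eqI[OF M fl mf F s])
qed

section \<open>Splitting of extensions\<close>

lemma simple_sq_Int_eq:
  assumes s: "simple_sq act M U0 U1" and X: "submod act M X" and "U0 \<subseteq> X" and "\<not> U1 \<subseteq> X"
  shows "U1 \<inter> X = U0"
proof -
  have "submod act M (U1 \<inter> X)" "U0 \<subseteq> U1 \<inter> X" "U1 \<inter> X \<subseteq> U1"
    using s submod_Int[OF _ X] assms(3) by (auto simp: simple_sq_def)
  then show ?thesis using s assms(4) unfolding simple_sq_def by blast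
qed

lemma extension_splits_in_semisimple_layer:
  assumes M: "module_on act M"
    and U0: "submod act M U0" and U1: "submod act M U1" and U2: "submod act M U2"
    and U01: "U0 \<subseteq> U1" and U12: "U1 \<subseteq> U2"
    and P': "submod act M P'" and P: "submod act M P" and P'P: "P' \<subseteq> P"
    and ss: "semisimple_sq act M P' P"
    and U2P: "U2 \<subseteq> ssum U0 P" and meet: "U1 \<inter> ssum U0 P' = U0"
  shows "\<exists>V. submod act M V \<and> U0 \<subseteq> V \<and> V \<subseteq> U2 \<and> V \<inter> U1 = U0 \<and> ssum V U1 = U2"
proof -
  define T where "T = ssum U1 P'"
  have T: "submod act M T" unfolding T_def using submod_ssum[OF M U1 P'] .
  have U1T: "U1 \<subseteq> T" unfolding T_def using ssum_upper1[OF submod_zero_mem[OF P']] .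
  have P'T: "P' \<subseteq> T" unfolding T_def using ssum_upper2[OF submod_zero_mem[OF U1]] .
  obtain E where E: "submod act M E" "P' \<subseteq> E" "T \<inter> E = P'" "P \<subseteq> ssum T E"
    using semisimple_sq_complement[OF ss T P P'T P'P] by blast
  define V where "V = ssum U0 (U2 \<inter> E)"
  have V: "submod act M V" unfolding V_def using submod_ssum[OF M U0 submod_Int[OF U2 E(1)]] .
  have U0V: "U0 \<subseteq> V" unfolding V_def using ssum_upper1[OF submod_zero_mem[OF submod_Int[OF U2 E(1)]]] .
  have VU2: "V \<subseteq> U2" unfolding V_def using ssum_least[OF U2] U01 U12 by blast
  have "V \<inter> U1 \<subseteq> U0"
  proof
    fix v assume v: "v \<in> V \<inter> U1"
    then obtain u0 w where vw: "v = u0 + w" "u0 \<in> U0" "w \<in> U2 \<inter> E" unfolding V_def by (auto elim: ssumE)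
    have "w \<in> U1" using submod_add_cancel_left[OF U1, of u0 w] vw v U01 by auto
    then have "w \<in> P'" using U1T vw(3) E(3) by blast
    then have "v \<in> ssum U0 P'" using vw ssumI by blast
    then show "v \<in> U0" using meet v by blast
  qed
  moreover have "U2 \<subseteq> ssum V U1"
  proof
    fix u assume u: "u \<in> U2"
    from u U2P have "u \<in> ssum U0 P" by blast
    then obtain u0 y where uy: "u = u0 + y" "u0 \<in> U0" "y \<in> P" by (rule ssumE)
    have yU2: "y \<in> U2" using submod_add_cancel_left[OF U2, of u0 y] uy u U01 U12 by auto
    from uy(3) E(4) have "y \<in> ssum T E" by blast
    then obtain t e where te: "y = t + e" "t \<in> T" "e \<in> E" by (rule ssumE)
    obtain u1 f where uf: "t = u1 + f" "u1 \<in> U1" "f \<in> P'" using te(2) unfolding T_def by (auto elim: ssumE)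
    have "f + e \<in> E" using submod_add[OF E(1)] uf(3) E(2) te(3) by blast
    moreover have "f + e = y - u1" using te uf by (simp add: algebra_simps)
    then have "f + e \<in> U2" using submod_diff[OF U2 yU2] uf(2) U12 by auto
    ultimately have "u0 + (f + e) \<in> V" unfolding V_def using uy(2) ssumI by blast
    moreover have "u = (u0 + (f + e)) + u1" using uy te uf by (simp add: algebra_simps)
    ultimately show "u \<in> ssum V U1" using ssumI uf(2) by metis
  qed
  ultimately show ?thesis using V U0V VU2 U01 ssum_least[OF U2 VU2 U12] by blast
qed

lemma extension_splits_of_levels:
  assumes M: "module_on act M" and F: "semisimple_filtration act M F"
    and U0: "submod act M U0" and U1: "submod act M U1" and U2: "submod act M U2"
    and s01: "simple_sq act M U0 U1" and U12: "U1 \<subseteq> U2"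
    and p: "U1 \<subseteq> ssum U0 (F p)" "\<not> U1 \<subseteq> ssum U0 (F (p - 1))"
    and q: "U2 \<subseteq> ssum U1 (F q)" and qp: "q \<le> p"
  shows "\<exists>V. submod act M V \<and> U0 \<subseteq> V \<and> V \<subseteq> U2 \<and> V \<inter> U1 = U0 \<and> ssum V U1 = U2"
proof -
  have Fn: "submod act M (F n)" for n using incr_filtration_submod[OF semisimple_filtrationD(1)[OF F]] .
  have mono: "F q \<subseteq> F p" "F (p - 1) \<subseteq> F p"
    using incr_filtration_mono[OF semisimple_filtrationD(1)[OF F]] qp by simp_all
  have U01: "U0 \<subseteq> U1" using s01 by (auto simp: simple_sq_def)
  have "F q \<subseteq> ssum U0 (F p)" using mono(1) ssum_upper2[OF submod_zero_mem[OF U0]] by blast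
  with p(1) have "ssum U1 (F q) \<subseteq> ssum U0 (F p)" by (rule ssum_least[OF submod_ssum[OF M U0 Fn]])
  with q have "U2 \<subseteq> ssum U0 (F p)" by (rule order.trans)
  moreover have "U1 \<inter> ssum U0 (F (p - 1)) = U0"
    using simple_sq_Int_eq[OF s01 submod_ssum[OF M U0 Fn] _ p(2)] ssum_upper1[OF submod_zero_mem[OF Fn]] .
  ultimately show ?thesis
    using extension_splits_in_semisimple_layer[OF M U0 U1 U2 U01 U12 Fn Fn mono(2)
        semisimple_filtrationD(2)[OF F]]
    by blast
qed

theorem lemma4p5:
  fixes act :: "'r::ring_1 \<Rightarrow> 'm::ab_group_add \<Rightarrow> 'm"
    and M :: "'m set" and F :: "int \<Rightarrow> 'm set"
    and a b a' b' :: "'m set"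
  assumes "module_on act M"
    and "finite_length act M"
    and "mult_free act M"
    and "semisimple_filtration act M F"
    and "simple_sq act M a b"
    and "simple_sq act M a' b'"
    and "points_to act M a b a' b'"
  shows "dF act F a b > dF act F a' b'"
proof -
  note M = assms(1) and fl = assms(2) and mf = assms(3) and F = assms(4)
  obtain U0 U1 U2 where U: "submod act M U0" "submod act M U1" "submod act M U2" "U0 \<subseteq> U1" "U1 \<subseteq> U2"
    and iso: "sq_iso act U0 U1 a' b'" "sq_iso act U1 U2 a b"
    and nonsplit: "\<not> (\<exists>V. submod act M V \<and> U0 \<subseteq> V \<and> V \<subseteq> U2 \<and> V \<inter> U1 = U0 \<and> ssum V U1 = U2)"
    using assms(7) unfolding points_to_def by blast
  have s01: "simple_sq act M U0 U1" using simple_sq_transfer_back[OF M iso(1) assms(6) U(1,2,4)] .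
  have s12: "simple_sq act M U1 U2" using simple_sq_transfer_back[OF M iso(2) assms(5) U(2,3,5)] .
  have p: "U1 \<subseteq> ssum U0 (F (dF act F a' b'))" "\<not> U1 \<subseteq> ssum U0 (F (dF act F a' b' - 1))"
    using dF_level[OF M fl mf F s01] dF_sq_iso[OF M fl mf F s01 assms(6) iso(1)] by simp_all
  have q: "U2 \<subseteq> ssum U1 (F (dF act F a b))"
    using dF_level[OF M fl mf F s12] dF_sq_iso[OF M fl mf F s12 assms(5) iso(2)] by simp
  show ?thesis
  proof (rule ccontr)
    assume "\<not> ?thesis"
    then have "dF act F a b \<le> dF act F a' b'" by simp
    from extension_splits_of_levels[OF M F U(1-3) s01 U(5) p q this] nonsplit show False by blast
  qed
qed

end
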